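(* Let $X$ be a closed oriented 3-manifold which is an integral homology 3-sphere. If $\varrho:\pi_1(X)\to SU(3)$ is an irreducible representation, then there exists $\gamma\in\pi_1(X)$ such that $\varrho(\gamma)$ has three distinct eigenvalues.
   Context: Irreducible means that the centralizer of $\varrho(\pi_1(X))$ in $SU(3)$ is the center $Z(SU(3))$ (equivalently, $\mathbb{C}^3$ has no proper nonzero $\varrho$-invariant subspace). *)

theory Defs
  imports "HOL-Analysis.Analysis" "HOL-Homology.Homology"
begin

definition topological_manifold :: "nat \<Rightarrow> 'a topology \<Rightarrow> bool" where
  "topological_manifold n X \<longleftrightarrow> Hausdorff_space X \<and> second_countable X \<and>
     (\<forall>x\<in>topspace X. \<exists>U. openin X U \<and> x \<in> U \<and>
         subtopology X U homeomorphic_space Euclidean_space n)"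

definition closed_3_manifold :: "'a topology \<Rightarrow> bool" where
  "closed_3_manifold X \<longleftrightarrow> topological_manifold 3 X \<and> compact_space X"

definition integral_homology_3_sphere :: "'a topology \<Rightarrow> bool" where
  "integral_homology_3_sphere X \<longleftrightarrow>
     (\<forall>p. homology_group p X \<cong> homology_group p (nsphere 3))"

definition closed_orientable :: "nat \<Rightarrow> 'a topology \<Rightarrow> bool" where
  "closed_orientable n X \<longleftrightarrow> homology_group (int n) X \<cong> integer_group"

definition loopin :: "'a topology \<Rightarrow> 'a \<Rightarrow> (real \<Rightarrow> 'a) \<Rightarrow> bool" where
  "loopin X x0 g \<longleftrightarrow> pathin X g \<and> g 0 = x0 \<and> g 1 = x0"

definition loop_join :: "(real \<Rightarrow> 'a) \<Rightarrow> (real \<Rightarrow> 'a) \<Rightarrow> real \<Rightarrow> 'a" where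
  "loop_join g h = (\<lambda>t. if t \<le> 1/2 then g (2 * t) else h (2 * t - 1))"

definition loop_homotopic :: "'a topology \<Rightarrow> 'a \<Rightarrow> (real \<Rightarrow> 'a) \<Rightarrow> (real \<Rightarrow> 'a) \<Rightarrow> bool" where
  "loop_homotopic X x0 g h \<longleftrightarrow>
     homotopic_with (\<lambda>k. k 0 = x0 \<and> k 1 = x0) (top_of_set {0..1}) X g h"

definition conj_transpose :: "complex^3^3 \<Rightarrow> complex^3^3" where
  "conj_transpose A = (\<chi> i j. cnj (A $ j $ i))"

definition SU3 :: "(complex^3^3) set" where
  "SU3 = {A. A ** conj_transpose A = mat 1 \<and> det A = 1}"

text \<open>A representation of pi_1(X, x0) into SU(3), described as a function on based loops
  that is constant on homotopy classes (rel endpoints) and turns concatenation into the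
  matrix product; such functions are exactly the homomorphisms pi_1(X,x0) -> SU(3).\<close>
definition pi1_rep_SU3 :: "'a topology \<Rightarrow> 'a \<Rightarrow> ((real \<Rightarrow> 'a) \<Rightarrow> complex^3^3) \<Rightarrow> bool" where
  "pi1_rep_SU3 X x0 \<rho> \<longleftrightarrow>
     (\<forall>g. loopin X x0 g \<longrightarrow> \<rho> g \<in> SU3) \<and>
     (\<forall>g h. loopin X x0 g \<and> loopin X x0 h \<and> loop_homotopic X x0 g h \<longrightarrow> \<rho> g = \<rho> h) \<and>
     (\<forall>g h. loopin X x0 g \<and> loopin X x0 h \<longrightarrow> \<rho> (loop_join g h) = \<rho> g ** \<rho> h)"

definition complex_subspace :: "(complex^3) set \<Rightarrow> bool" where
  "complex_subspace W \<longleftrightarrow> 0 \<in> W \<and> (\<forall>v\<in>W. \<forall>w\<in>W. v + w \<in> W) \<and>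
     (\<forall>c. \<forall>v\<in>W. c *s v \<in> W)"

definition irreducible_rep :: "'a topology \<Rightarrow> 'a \<Rightarrow> ((real \<Rightarrow> 'a) \<Rightarrow> complex^3^3) \<Rightarrow> bool" where
  "irreducible_rep X x0 \<rho> \<longleftrightarrow>
     \<not> (\<exists>W. complex_subspace W \<and> W \<noteq> {0} \<and> W \<noteq> UNIV \<and>
            (\<forall>g. loopin X x0 g \<longrightarrow> (\<forall>v\<in>W. \<rho> g *v v \<in> W)))"

definition eigenvalues3 :: "complex^3^3 \<Rightarrow> complex set" where
  "eigenvalues3 A = {c. \<exists>v. v \<noteq> 0 \<and> A *v v = c *s v}"

end

theory Submission
  imports Defs "HOL-Computational_Algebra.Fundamental_Theorem_Algebra"
begin

text \<open>
  A unitary matrix \<open>A\<close> whose characteristic polynomial has a double root \<open>l\<close> (and third root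
  \<open>m\<close>) satisfies \<open>(A - l)(A - m) = 0\<close>, by Cayley--Hamilton and normality; so \<open>A - l\<close> is zero
  or \<open>m - l\<close> times a normal idempotent of trace one, i.e. of a rank-one orthogonal projection.
  Thus \<open>A = a I + b u u\<^sup>*\<close> with \<open>a \<noteq> 0\<close> and \<open>u\<close> a unit vector.

  If \<open>A = a I + b u u\<^sup>*\<close>, \<open>B = c I + d v v\<^sup>*\<close> and \<open>AB\<close> all have this shape, then \<open>u\<close> and \<open>v\<close>
  are orthogonal or proportional (otherwise a vector orthogonal to both shows that \<open>AB - e I\<close> has
  rank two), hence \<open>A\<close> and \<open>B\<close> commute. So if no element of the image of \<open>\<rho>\<close> had three
  distinct eigenvalues, the image would be a commuting family of such matrices, and the line of
  any non-scalar member would be invariant.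
\<close>

definition cinner :: "complex^3 \<Rightarrow> complex^3 \<Rightarrow> complex" where
  "cinner x y = cnj (x$1) * y$1 + cnj (x$2) * y$2 + cnj (x$3) * y$3"

definition outer :: "complex^3 \<Rightarrow> complex^3^3" where
  "outer u = (\<chi> i j. u$i * cnj (u$j))"

definition principal_minor_sum :: "complex^3^3 \<Rightarrow> complex" where
  "principal_minor_sum A =
     A$1$1 * A$2$2 - A$1$2 * A$2$1 + A$1$1 * A$3$3 - A$1$3 * A$3$1 + A$2$2 * A$3$3 - A$2$3 * A$3$2"

definition normal_matrix :: "complex^3^3 \<Rightarrow> bool" where
  "normal_matrix A \<longleftrightarrow> A ** conj_transpose A = conj_transpose A ** A"

lemma matrix_mult_3_component:
  "((A::complex^3^3) ** B)$i$j = A$i$1 * B$1$j + A$i$2 * B$2$j + A$i$3 * B$3$j"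
  by (simp add: matrix_matrix_mult_def sum_3)

lemma matrix_vector_mult_3_component:
  "((A::complex^3^3) *v x)$i = A$i$1 * x$1 + A$i$2 * x$2 + A$i$3 * x$3"
  by (simp add: matrix_vector_mult_def sum_3)

lemma trace_3: "trace (A::complex^3^3) = A$1$1 + A$2$2 + A$3$3"
  by (simp add: trace_def sum_3)

lemma mat_component: "(mat c :: 'a::zero^'n^'n)$i$j = (if i = j then c else 0)"
  by (simp add: mat_def)

lemma conj_transpose_component: "conj_transpose A $ i $ j = cnj (A$j$i)"
  by (simp add: conj_transpose_def)

lemma outer_component: "outer u $ i $ j = u$i * cnj (u$j)"
  by (simp add: outer_def)

lemma distinct_3: "(1::3) \<noteq> 2" "(1::3) \<noteq> 3" "(2::3) \<noteq> 3" "(2::3) \<noteq> 1" "(3::3) \<noteq> 1" "(3::3) \<noteq> 2"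
  by simp_all

lemmas component_simps_3 = vector_add_component vector_minus_component vector_uminus_component
  vector_smult_component zero_index matrix_mult_3_component matrix_vector_mult_3_component
  mat_component conj_transpose_component outer_component cinner_def trace_3 distinct_3
  if_True if_False

lemma matrix_diff_ldistrib: "(A::'a::ring_1^'n^'m) ** (B - C) = A ** B - A ** C"
  by (simp add: matrix_matrix_mult_def vec_eq_iff sum_subtractf right_diff_distrib)

lemma matrix_add_rdistrib: "((A::'a::semiring_1^'n^'m) + B) ** C = A ** C + B ** C"
  by (simp add: matrix_matrix_mult_def vec_eq_iff sum.distrib distrib_right)

lemma matrix_diff_rdistrib: "((A::'a::ring_1^'n^'m) - B) ** C = A ** C - B ** C"
  by (simp add: matrix_matrix_mult_def vec_eq_iff sum_subtractf left_diff_distrib)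

lemma mat_diff_mat: "mat a - mat b = (mat (a - b) :: 'a::ring_1^'n^'n)"
  by (simp add: mat_def vec_eq_iff)

lemma matrix_mul_mat_commute: "A ** mat a = mat a ** (A::complex^3^3)"
  unfolding vec_eq_iff forall_3 by (simp only: component_simps_3, simp)

lemma mat_mult_mat: "mat a ** mat b = (mat (a * b) :: complex^3^3)"
  unfolding vec_eq_iff forall_3 by (simp only: component_simps_3, simp)

lemma trace_mat_mult: "trace (mat c ** A) = c * trace (A::complex^3^3)"
  by (simp only: component_simps_3, simp add: algebra_simps)

lemma matrix_mul_mat_left_commute:
  fixes A B :: "complex^3^3"
  shows "A ** (mat c ** B) = mat c ** (A ** B)"
  by (simp add: matrix_mul_assoc matrix_mul_mat_commute[of A c])


lemma mat_mult_mat_mult: "mat a ** (mat b ** A) = mat (a * b) ** (A::complex^3^3)"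
  by (simp only: matrix_mul_assoc mat_mult_mat)

lemma conj_transpose_mult: "conj_transpose (A ** B) = conj_transpose B ** conj_transpose A"
  unfolding vec_eq_iff forall_3 by (simp only: component_simps_3, simp add: algebra_simps)

lemma conj_transpose_diff: "conj_transpose (A - B) = conj_transpose A - conj_transpose B"
  by (simp add: conj_transpose_def vec_eq_iff)

lemma conj_transpose_mat: "conj_transpose (mat c) = mat (cnj c)"
  by (simp add: conj_transpose_def mat_def vec_eq_iff)

lemma conj_transpose_conj_transpose [simp]: "conj_transpose (conj_transpose A) = A"
  by (simp add: conj_transpose_def vec_eq_iff)

lemma conj_transpose_outer: "conj_transpose (outer u) = outer u"
  by (simp add: conj_transpose_def outer_def vec_eq_iff mult.commute)

lemma trace_conj_transpose_mult_self:
  "trace (conj_transpose X ** X) = of_real (\<Sum>j\<in>UNIV. \<Sum>i\<in>UNIV. (cmod (X$i$j))\<^sup>2)"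
  by (simp add: trace_def matrix_matrix_mult_def conj_transpose_def of_real_sum
      complex_norm_square[symmetric] mult.commute del: of_real_power)

lemma trace_conj_transpose_mult_self_eq_0:
  assumes "trace (conj_transpose X ** X) = 0"
  shows "X = 0"
proof -
  have "(\<Sum>j\<in>UNIV. \<Sum>i\<in>UNIV. (cmod (X$i$j))\<^sup>2) = 0"
    using assms by (simp only: trace_conj_transpose_mult_self of_real_eq_0_iff)
  then have "(cmod (X$i$j))\<^sup>2 = 0" for i j
    by (simp add: sum_nonneg_eq_0_iff sum_nonneg)
  then show ?thesis
    by (simp add: vec_eq_iff)
qed

lemma conj_transpose_mult_self_eq_0_iff: "conj_transpose X ** X = 0 \<longleftrightarrow> X = 0"
  by (metis mat_0 trace_0 times0_right trace_conj_transpose_mult_self_eq_0)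

lemma cinner_self: "cinner v v = of_real (\<Sum>i\<in>UNIV. (cmod (v$i))\<^sup>2)"
  by (simp add: cinner_def sum_3 complex_norm_square[symmetric] mult.commute del: of_real_power)

lemma cinner_self_eq_0_iff: "cinner v v = 0 \<longleftrightarrow> v = 0"
proof
  assume "cinner v v = 0"
  then have "(\<Sum>i\<in>UNIV. (cmod (v$i))\<^sup>2) = 0"
    by (simp only: cinner_self of_real_eq_0_iff)
  then show "v = 0"
    by (simp add: sum_nonneg_eq_0_iff vec_eq_iff)
qed (simp add: cinner_def)

lemma cinner_smult_self: "cinner (c *s v) (c *s v) = c * cnj c * cinner v v"
  by (simp add: cinner_def algebra_simps)

lemma cinner_commute: "cinner y x = cnj (cinner x y)"
  by (simp add: cinner_def)

lemma cinner_add_right: "cinner x (y + y') = cinner x y + cinner x y'"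
  by (simp add: cinner_def algebra_simps)

lemma cinner_diff_right: "cinner x (y - y') = cinner x y - cinner x y'"
  by (simp add: cinner_def algebra_simps)

lemma cinner_smult_right: "cinner x (c *s y) = c * cinner x y"
  by (simp add: cinner_def algebra_simps)

lemma cinner_zero_right: "cinner x 0 = 0"
  by (simp add: cinner_def)

lemma mat_mult_vector: "(mat a :: complex^3^3) *v x = a *s x"
  unfolding vec_eq_iff forall_3 by (simp only: component_simps_3, simp)

lemma outer_mult_vector: "outer u *v x = cinner u x *s u"
  unfolding vec_eq_iff forall_3 by (simp only: component_simps_3, simp add: algebra_simps)

section \<open>The characteristic polynomial\<close>

lemma eigenvalues3_iff_det: "c \<in> eigenvalues3 A \<longleftrightarrow> det (A - mat c) = 0"
proof -
  have kernel: "det M = 0 \<longleftrightarrow> (\<exists>x. x \<noteq> 0 \<and> M *v x = 0)" for M :: "complex^3^3"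
    by (metis invertible_det_nz invertible_left_inverse matrix_left_invertible_ker)
  have "(A - mat c) *v x = A *v x - c *s x" for x
    unfolding vec_eq_iff forall_3 by (simp only: component_simps_3, simp add: algebra_simps)
  then show ?thesis
    unfolding eigenvalues3_def kernel by auto
qed

lemma det_sub_mat:
  "det ((A::complex^3^3) - mat c) = det A - principal_minor_sum A * c + trace A * c^2 - c^3"
  by (simp add: det_3 mat_def trace_3 principal_minor_sum_def power2_eq_square power3_eq_cube
      algebra_simps)

lemma char_poly_roots:
  fixes A :: "complex^3^3"
  obtains r0 r1 r2 where "\<And>c. det (A - mat c) = - ((c - r0) * (c - r1) * (c - r2))"
    "trace A = r0 + r1 + r2" "principal_minor_sum A = r0 * r1 + r0 * r2 + r1 * r2"
    "det A = r0 * r1 * r2"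
proof -
  define p where "p = [:det A, - principal_minor_sum A, trace A, -1:]"
  have deg: "degree p = 3" and lead: "Polynomial.coeff p 3 = -1"
    by (simp_all add: p_def eval_nat_numeral)
  obtain r where "Polynomial.smult (lead_coeff p) (\<Prod>i<degree p. [:- r i, 1:]) = p"
    using complex_poly_decompose' by blast
  moreover have "(\<Prod>i<3. [:- r i, 1:]) = [:- r 0, 1:] * [:- r 1, 1:] * [:- r 2, 1:]"
    by (simp add: eval_nat_numeral mult_ac)
  ultimately have "p = Polynomial.smult (-1) ([:- r 0, 1:] * [:- r 1, 1:] * [:- r 2, 1:])"
    by (simp only: deg lead)
  then have coeffs: "det A = r 0 * r 1 * r 2"
    "principal_minor_sum A = r 0 * r 1 + r 0 * r 2 + r 1 * r 2" "trace A = r 0 + r 1 + r 2"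
    unfolding p_def by (simp_all add: algebra_simps)
  show ?thesis
  proof (rule that[of "r 0" "r 1" "r 2"])
    show "det (A - mat c) = - ((c - r 0) * (c - r 1) * (c - r 2))" for c
      unfolding det_sub_mat coeffs by (simp add: power2_eq_square power3_eq_cube algebra_simps)
  qed (use coeffs in auto)
qed

lemma repeated_eigenvalue_char_poly:
  fixes A :: "complex^3^3"
  assumes "card (eigenvalues3 A) \<noteq> 3"
  obtains l m where "trace A = 2 * l + m" "principal_minor_sum A = l * l + 2 * l * m"
    "det A = l * l * m"
proof -
  obtain r0 r1 r2 where r: "\<And>c. det (A - mat c) = - ((c - r0) * (c - r1) * (c - r2))"
    "trace A = r0 + r1 + r2" "principal_minor_sum A = r0 * r1 + r0 * r2 + r1 * r2"
    "det A = r0 * r1 * r2"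
    using char_poly_roots by blast
  have "c \<in> eigenvalues3 A \<longleftrightarrow> c \<in> {r0, r1, r2}" for c
    unfolding eigenvalues3_iff_det r(1) by auto
  then have "card {r0, r1, r2} \<noteq> 3"
    using assms by (metis subsetI subset_antisym)
  then have "r0 = r1 \<or> r0 = r2 \<or> r1 = r2"
    by (rule contrapos_np) simp
  then show ?thesis
  proof (elim disjE)
    assume "r0 = r1"
    then show ?thesis using r by (intro that[of r0 r2]) (simp_all add: algebra_simps)
  next
    assume "r0 = r2"
    then show ?thesis using r by (intro that[of r0 r1]) (simp_all add: algebra_simps)
  next
    assume "r1 = r2"
    then show ?thesis using r by (intro that[of r1 r0]) (simp_all add: algebra_simps)
  qed
qed

lemma cayley_hamilton_3:
  fixes A :: "complex^3^3"
  assumes "trace A = x + y + z" "principal_minor_sum A = x * y + x * z + y * z" "det A = x * y * z"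
  shows "(A - mat x) ** (A - mat y) ** (A - mat z) = 0"
proof -
  have "(A - mat x) ** (A - mat y) ** (A - mat z) =
      A ** A ** A - mat (x + y + z) ** (A ** A) + mat (x * y + x * z + y * z) ** A - mat (x * y * z)"
    unfolding vec_eq_iff forall_3 by (simp only: component_simps_3, simp add: algebra_simps)
  also have "\<dots> = A ** A ** A - mat (trace A) ** (A ** A) + mat (principal_minor_sum A) ** A
      - mat (det A)"
    by (simp only: assms)
  also have "\<dots> = 0"
    unfolding principal_minor_sum_def det_3 vec_eq_iff forall_3
    by (simp only: component_simps_3, simp add: algebra_simps)
  finally show ?thesis .
qed

section \<open>Normal matrices with a repeated eigenvalue\<close>

lemma unitary_imp_normal_matrix: "A ** conj_transpose A = mat 1 \<Longrightarrow> normal_matrix A"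
  unfolding normal_matrix_def by (metis matrix_left_right_inverse)

lemma normal_matrix_sub_mat:
  assumes "normal_matrix A"
  shows "normal_matrix (A - mat c)"
proof -
  have "(A - mat c) ** conj_transpose (A - mat c) =
      A ** conj_transpose A - mat (cnj c) ** A - mat c ** conj_transpose A + mat (c * cnj c)"
    "conj_transpose (A - mat c) ** (A - mat c) =
      conj_transpose A ** A - mat (cnj c) ** A - mat c ** conj_transpose A + mat (c * cnj c)"
    unfolding vec_eq_iff forall_3 by (simp only: component_simps_3, simp add: algebra_simps)+
  with assms show ?thesis
    unfolding normal_matrix_def by simp
qed

lemma normal_matrix_mat_mult:
  assumes "normal_matrix A"
  shows "normal_matrix (mat c ** A)"
proof -
  have "mat c ** A ** conj_transpose (mat c ** A) = mat (c * cnj c) ** (A ** conj_transpose A)"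
    "conj_transpose (mat c ** A) ** (mat c ** A) = mat (c * cnj c) ** (conj_transpose A ** A)"
    unfolding vec_eq_iff forall_3 by (simp only: component_simps_3, simp add: algebra_simps)+
  with assms show ?thesis
    unfolding normal_matrix_def by simp
qed

lemma normal_mult_eq_0_iff:
  fixes X M :: "complex^3^3"
  assumes "normal_matrix X"
  shows "X ** M = 0 \<longleftrightarrow> conj_transpose X ** M = 0"
proof -
  have "conj_transpose (X ** M) ** (X ** M) = conj_transpose M ** ((conj_transpose X ** X) ** M)"
    by (simp add: conj_transpose_mult matrix_mul_assoc)
  also have "\<dots> = conj_transpose M ** ((X ** conj_transpose X) ** M)"
    using assms by (simp add: normal_matrix_def)
  also have "\<dots> = conj_transpose (conj_transpose X ** M) ** (conj_transpose X ** M)"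
    by (simp add: conj_transpose_mult matrix_mul_assoc)
  finally show ?thesis
    by (metis conj_transpose_mult_self_eq_0_iff)
qed

lemma normal_mult_square_eq_0:
  fixes X M :: "complex^3^3"
  assumes "normal_matrix X" and "X ** X ** M = 0"
  shows "X ** M = 0"
proof -
  have "X ** (X ** M) = 0"
    using assms(2) by (simp add: matrix_mul_assoc)
  then have "conj_transpose X ** (X ** M) = 0"
    using normal_mult_eq_0_iff[OF assms(1)] by blast
  then have "conj_transpose (X ** M) ** (X ** M) = 0"
    by (simp add: conj_transpose_mult matrix_mul_assoc[symmetric])
  then show ?thesis
    by (simp add: conj_transpose_mult_self_eq_0_iff)
qed

lemma normal_idempotent_hermitian:
  assumes "normal_matrix P" and "P ** P = P"
  shows "conj_transpose P = P"
proof -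
  have "P ** (P - mat 1) = 0"
    using assms(2) by (simp add: matrix_diff_ldistrib)
  then have "conj_transpose P ** (P - mat 1) = 0"
    using normal_mult_eq_0_iff[OF assms(1)] by blast
  then have adj: "conj_transpose P ** P = conj_transpose P"
    by (simp add: matrix_diff_ldistrib)
  have "(P - mat 1) ** P = 0"
    using assms(2) by (simp add: matrix_diff_rdistrib)
  then have "conj_transpose (P - mat 1) ** P = 0"
    using normal_mult_eq_0_iff[OF normal_matrix_sub_mat[OF assms(1)]] by blast
  then have "conj_transpose P ** P = P"
    by (simp add: conj_transpose_diff conj_transpose_mat matrix_diff_rdistrib)
  with adj show ?thesis
    by simp
qed

lemma exists_unit_multiple:
  assumes "v \<noteq> 0"
  obtains c where "cinner (c *s v) (c *s v) = 1"
proof -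
  define p where "p = (\<Sum>i\<in>UNIV. (cmod (v$i))\<^sup>2)"
  have "p \<ge> 0"
    by (simp add: p_def sum_nonneg)
  moreover have "p \<noteq> 0"
    using assms unfolding p_def by (metis cinner_self cinner_self_eq_0_iff of_real_0)
  ultimately have sqrt: "sqrt p * sqrt p = p" "sqrt p > 0"
    by simp_all
  define c where "c = complex_of_real (1 / sqrt p)"
  have "cinner (c *s v) (c *s v) = c * cnj c * complex_of_real p"
    by (simp only: cinner_smult_self cinner_self[of v] flip: p_def)
  also have "\<dots> = complex_of_real (1 / sqrt p * (1 / sqrt p) * p)"
    by (simp only: c_def complex_cnj_complex_of_real of_real_mult)
  also have "1 / sqrt p * (1 / sqrt p) * p = 1"
    using sqrt by (simp add: field_simps)
  finally show ?thesis
    using that by simp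
qed

lemma idempotent_fixed_unit_vector:
  assumes "P ** P = P" and "P \<noteq> (0::complex^3^3)"
  obtains u where "cinner u u = 1" "P *v u = u"
proof -
  obtain i j where "P$i$j \<noteq> 0"
    using assms(2) by (auto simp: vec_eq_iff)
  define v where "v = column j P"
  have "v \<noteq> 0"
    using \<open>P$i$j \<noteq> 0\<close> by (auto simp: v_def column_def vec_eq_iff)
  then obtain c where unit: "cinner (c *s v) (c *s v) = 1"
    by (rule exists_unit_multiple)
  have "P *v v = column j (P ** P)"
    by (simp add: v_def column_def matrix_vector_mult_def matrix_matrix_mult_def)
  then have "P *v v = v"
    by (simp add: assms(1) v_def)
  then have "P *v (c *s v) = c *s v"
    by (simp add: vector_scalar_commute)
  with unit show ?thesis
    by (rule that)
qed

lemma outer_mult_outer: "outer u ** outer u = mat (cinner u u) ** outer u"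
  unfolding vec_eq_iff forall_3 by (simp only: component_simps_3, simp add: algebra_simps)

lemma matrix_mult_outer: "(A::complex^3^3) ** outer u = (\<chi> i k. (A *v u)$i * cnj (u$k))"
  unfolding vec_eq_iff forall_3 by (simp only: component_simps_3, simp add: algebra_simps)

lemma trace_outer: "trace (outer u) = cinner u u"
  by (simp only: component_simps_3, simp add: algebra_simps)

lemma hermitian_idempotent_trace_one:
  assumes herm: "conj_transpose P = P" and idem: "P ** P = P" and tr: "trace P = 1"
  obtains u where "cinner u u = 1" "P = outer u"
proof -
  have "P \<noteq> 0"
    using tr by (auto simp: trace_3)
  then obtain u where unit: "cinner u u = 1" and fixed: "P *v u = u"
    using idem idempotent_fixed_unit_vector by blast
  define R where "R = outer u"
  have PR: "P ** R = R"
    unfolding R_def matrix_mult_outer fixed by (simp add: outer_def)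
  have RP: "R ** P = R"
    using arg_cong[OF PR, of conj_transpose] by (simp add: conj_transpose_mult herm R_def conj_transpose_outer)
  have RR: "R ** R = R"
    by (simp add: R_def outer_mult_outer unit)
  define M where "M = P - R"
  have "conj_transpose M ** M = M"
    by (simp add: M_def conj_transpose_diff herm R_def conj_transpose_outer matrix_diff_ldistrib
        matrix_diff_rdistrib idem PR[unfolded R_def] RP[unfolded R_def] RR[unfolded R_def])
  moreover have "trace M = 0"
    by (simp add: M_def trace_sub tr R_def trace_outer unit)
  ultimately have "M = 0"
    by (metis trace_conj_transpose_mult_self_eq_0)
  with unit show ?thesis
    by (intro that[of u]) (simp_all add: M_def R_def)
qed

lemma normal_repeated_eigenvalue_decomp:
  assumes normal: "normal_matrix A"
    and char: "trace A = 2 * l + m" "principal_minor_sum A = l * l + 2 * l * m" "det A = l * l * m"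
  obtains b u where "cinner u u = 1" "A = mat l + mat b ** outer u"
proof -
  define N where "N = A - mat l"
  have normal_N: "normal_matrix N"
    unfolding N_def using normal by (rule normal_matrix_sub_mat)
  have "N ** N ** (A - mat m) = 0"
    unfolding N_def using char by (intro cayley_hamilton_3) (simp_all add: algebra_simps)
  then have NM: "N ** (A - mat m) = 0"
    by (rule normal_mult_square_eq_0[OF normal_N])
  show ?thesis
  proof (cases "l = m")
    case True
    then have "N ** N ** mat 1 = 0"
      using NM by (simp add: N_def)
    then have "N = 0"
      using normal_mult_square_eq_0[OF normal_N, of "mat 1"] by simp
    then show ?thesis
      by (intro that[of "axis 1 1" 0]) (simp_all add: N_def cinner_def axis_def)
  next
    case False
    define P where "P = mat (1 / (m - l)) ** N"
    have "A - mat m = N - mat (m - l)"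
      by (simp add: N_def flip: mat_diff_mat)
    then have NN: "N ** N = mat (m - l) ** N"
      using NM by (simp add: matrix_diff_ldistrib matrix_mul_mat_commute)
    have scalar: "1 / (m - l) * (1 / (m - l) * (m - l)) = 1 / (m - l)"
      using False by simp
    have "P ** P = mat (1 / (m - l)) ** (N ** (mat (1 / (m - l)) ** N))"
      unfolding P_def by (rule matrix_mul_assoc[symmetric])
    also have "\<dots> = mat (1 / (m - l)) ** (mat (1 / (m - l)) ** (N ** N))"
      by (simp only: matrix_mul_mat_left_commute[of N "1 / (m - l)" N])
    also have "\<dots> = P"
      by (simp only: NN mat_mult_mat_mult scalar P_def)
    finally have idem: "P ** P = P" .
    have "normal_matrix P"
      unfolding P_def using normal_N by (rule normal_matrix_mat_mult)
    then have herm: "conj_transpose P = P"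
      using idem by (rule normal_idempotent_hermitian)
    have "trace N = m - l"
      unfolding N_def trace_sub char(1) by (simp add: trace_3 mat_component)
    then have "trace P = 1"
      using False by (simp add: P_def trace_mat_mult)
    then obtain u where "cinner u u = 1" "P = outer u"
      by (rule hermitian_idempotent_trace_one[OF herm idem])
    moreover have "A = mat l + mat (m - l) ** P"
      using False by (simp add: P_def N_def mat_mult_mat_mult)
    ultimately show ?thesis
      by (intro that) auto
  qed
qed

lemma unitary_repeated_eigenvalue_decomp:
  assumes unitary: "A ** conj_transpose A = mat 1" and "card (eigenvalues3 A) \<noteq> 3"
  obtains a b u where "a \<noteq> 0" "cinner u u = 1" "A = mat a + mat b ** outer u"
proof -
  obtain l m where char: "trace A = 2 * l + m" "principal_minor_sum A = l * l + 2 * l * m"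
    "det A = l * l * m"
    using assms(2) repeated_eigenvalue_char_poly by blast
  have "det A * det (conj_transpose A) = 1"
    using unitary by (metis det_I det_mul)
  then have "l \<noteq> 0"
    using char(3) by auto
  moreover obtain b u where "cinner u u = 1" "A = mat l + mat b ** outer u"
    using normal_repeated_eigenvalue_decomp[OF unitary_imp_normal_matrix[OF unitary] char] .
  ultimately show ?thesis
    by (rule that)
qed

section \<open>Commuting scalar plus rank-one matrices\<close>

lemma unit_pair_independent:
  assumes "cinner u u = 1" "cinner v v = 1" "cinner u v * cnj (cinner u v) \<noteq> 1"
    and "\<alpha> *s u + \<beta> *s v = 0"
  shows "\<alpha> = 0 \<and> \<beta> = 0"
proof -
  let ?k = "cinner u v"
  have "cinner u (\<alpha> *s u + \<beta> *s v) = 0" "cinner v (\<alpha> *s u + \<beta> *s v) = 0"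
    using assms(4) by (simp_all add: cinner_zero_right)
  then have "\<alpha> + \<beta> * ?k = 0" "\<alpha> * cnj ?k + \<beta> = 0"
    using assms(1,2) cinner_commute[of v u]
    by (simp_all add: cinner_add_right cinner_smult_right)
  then have sum: "\<alpha> + \<beta> * ?k = 0" and \<beta>: "\<beta> = - (\<alpha> * cnj ?k)"
    by (simp_all add: eq_neg_iff_add_eq_0 add.commute)
  have "\<alpha> * (1 - ?k * cnj ?k) = \<alpha> + \<beta> * ?k"
    by (simp add: \<beta> algebra_simps)
  with sum assms(3) have "\<alpha> = 0"
    by simp
  with \<beta> show ?thesis
    by simp
qed

lemma coefficients_of_collinear_combinations:
  assumes "cinner u u = 1" "cinner v v = 1" "cinner u v * cnj (cinner u v) \<noteq> 1"
    and x: "p1 *s u + q1 *s v = s *s z" and y: "p2 *s u + q2 *s v = t *s z"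
  shows "p1 * q2 = p2 * q1"
proof -
  have "(t * p1 - s * p2) *s u + (t * q1 - s * q2) *s v =
      t *s (p1 *s u + q1 *s v) - s *s (p2 *s u + q2 *s v)"
    by (simp add: vec_eq_iff algebra_simps)
  also have "\<dots> = 0"
    by (simp add: x y vec_eq_iff)
  finally have "t * p1 - s * p2 = 0 \<and> t * q1 - s * q2 = 0"
    by (rule unit_pair_independent[OF assms(1-3)])
  then have ts: "t * p1 = s * p2" "t * q1 = s * q2"
    by simp_all
  show ?thesis
  proof (cases "s = 0 \<and> t = 0")
    case True
    then have "p1 = 0 \<and> q1 = 0"
      using x unit_pair_independent[OF assms(1-3)] by simp
    then show ?thesis
      by simp
  next
    case False
    have "t * (p1 * q2 - p2 * q1) = (t * p1) * q2 - p2 * (t * q1)"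
      by (simp add: algebra_simps)
    also have "\<dots> = 0"
      unfolding ts by (simp add: algebra_simps)
    finally have t: "t * (p1 * q2 - p2 * q1) = 0" .
    have "s * (p1 * q2 - p2 * q1) = p1 * (s * q2) - (s * p2) * q1"
      by (simp add: algebra_simps)
    also have "\<dots> = 0"
      unfolding ts[symmetric] by (simp add: algebra_simps)
    finally have "s * (p1 * q2 - p2 * q1) = 0" .
    with t False show ?thesis
      by auto
  qed
qed

definition conj_cross :: "complex^3 \<Rightarrow> complex^3 \<Rightarrow> complex^3" where
  "conj_cross u v = vector [cnj (u$2 * v$3 - u$3 * v$2), cnj (u$3 * v$1 - u$1 * v$3),
     cnj (u$1 * v$2 - u$2 * v$1)]"

lemma conj_cross_component:
  "conj_cross u v $ 1 = cnj (u$2 * v$3 - u$3 * v$2)" "conj_cross u v $ 2 = cnj (u$3 * v$1 - u$1 * v$3)"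
  "conj_cross u v $ 3 = cnj (u$1 * v$2 - u$2 * v$1)"
  by (simp_all add: conj_cross_def)

lemma conj_cross_orthogonal: "cinner u (conj_cross u v) = 0" "cinner v (conj_cross u v) = 0"
  by (simp_all only: cinner_def conj_cross_component complex_cnj_mult complex_cnj_diff
      complex_cnj_cnj, simp_all add: algebra_simps)

lemma cinner_conj_cross_self:
  "cinner (conj_cross u v) (conj_cross u v) = cinner u u * cinner v v - cinner u v * cinner v u"
  by (simp only: cinner_def conj_cross_component complex_cnj_mult complex_cnj_diff complex_cnj_cnj,
      simp add: algebra_simps)

lemma scalar_plus_rank_one_mult_vector:
  "(mat a + mat b ** outer u) *v x = a *s x + (b * cinner u x) *s u"
  unfolding vec_eq_iff forall_3 by (simp only: component_simps_3, simp add: algebra_simps)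

lemma scalar_plus_rank_one_product_mult_vector:
  "(mat a + mat b ** outer u) *v ((mat c + mat d ** outer v) *v x) =
     (a * c) *s x + (a * d * cinner v x) *s v + (b * c * cinner u x + b * d * cinner u v * cinner v x) *s u"
  unfolding scalar_plus_rank_one_mult_vector
  by (simp add: cinner_add_right cinner_smult_right vec_eq_iff algebra_simps)

lemma exists_orthogonal_vector:
  assumes "cinner u u = 1" "cinner v v = 1" "cinner u v * cnj (cinner u v) \<noteq> 1"
  obtains w where "w \<noteq> 0" "cinner u w = 0" "cinner v w = 0"
proof
  have "cinner (conj_cross u v) (conj_cross u v) \<noteq> 0"
    using assms cinner_commute[of v u] by (simp add: cinner_conj_cross_self)
  then show "conj_cross u v \<noteq> 0"
    by (auto simp: cinner_def)
qed (simp_all add: conj_cross_orthogonal)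

lemma scalar_plus_rank_one_product_eq_image:
  assumes "(mat a + mat b ** outer u) ** (mat c + mat d ** outer v) = mat e + mat f ** outer z"
  shows "(a * c - e) *s x + (a * d * cinner v x) *s v
    + (b * c * cinner u x + b * d * cinner u v * cinner v x) *s u = (f * cinner z x) *s z"
proof -
  have "(a * c) *s x + (a * d * cinner v x) *s v
      + (b * c * cinner u x + b * d * cinner u v * cinner v x) *s u = e *s x + (f * cinner z x) *s z"
    using scalar_plus_rank_one_product_mult_vector[of a b u c d v x, symmetric]
    unfolding matrix_vector_mul_assoc assms unfolding scalar_plus_rank_one_mult_vector .
  then show ?thesis
    by (simp add: vec_eq_iff algebra_simps)
qed

lemma scalar_plus_rank_one_product_not_scalar_plus_rank_one:
  assumes uu: "cinner u u = 1" and vv: "cinner v v = 1"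
    and k0: "cinner u v \<noteq> 0" and k1: "cinner u v * cnj (cinner u v) \<noteq> 1"
    and nz: "a \<noteq> 0" "b \<noteq> 0" "c \<noteq> 0" "d \<noteq> 0"
  shows "(mat a + mat b ** outer u) ** (mat c + mat d ** outer v) \<noteq> mat e + mat f ** outer z"
proof
  let ?k = "cinner u v"
  assume "(mat a + mat b ** outer u) ** (mat c + mat d ** outer v) = mat e + mat f ** outer z"
  note image = scalar_plus_rank_one_product_eq_image[OF this]
  obtain w where "w \<noteq> 0" and uw: "cinner u w = 0" and vw: "cinner v w = 0"
    using exists_orthogonal_vector[OF uu vv k1] by blast
  have u_image: "(a * c - e + b * c + b * d * ?k * cnj ?k) *s u + (a * d * cnj ?k) *s v
      = (f * cinner z u) *s z"
  proof -
    have "(a * c - e + b * c + b * d * ?k * cnj ?k) *s u + (a * d * cnj ?k) *s v =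
        (a * c - e) *s u + (a * d * cinner v u) *s v + (b * c * cinner u u + b * d * ?k * cinner v u) *s u"
      by (simp add: uu cinner_commute[of v u] vec_eq_iff algebra_simps)
    also have "\<dots> = (f * cinner z u) *s z"
      by (rule image)
    finally show ?thesis .
  qed
  (* If a c = e, then AB - e I maps the plane spanned by u and v into the line of z, although its
     matrix on that plane has determinant a b c d (1 - |k|^2); otherwise the eigenvector w of AB
     forces z to be a multiple of w, hence orthogonal to u. *)
  show False
  proof (cases "a * c = e")
    case True
    have v_image: "(b * c * ?k + b * d * ?k) *s u + (a * d) *s v = (f * cinner z v) *s z"
    proof -
      have "(b * c * ?k + b * d * ?k) *s u + (a * d) *s v =
          (a * c - e) *s v + (a * d * cinner v v) *s v + (b * c * ?k + b * d * ?k * cinner v v) *s u"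
        by (simp add: vv True vec_eq_iff algebra_simps)
      also have "\<dots> = (f * cinner z v) *s z"
        by (rule image)
      finally show ?thesis .
    qed
    have "(b * c + b * d * ?k * cnj ?k) * (a * d) = (b * c * ?k + b * d * ?k) * (a * d * cnj ?k)"
      using coefficients_of_collinear_combinations[OF uu vv k1 _ v_image] u_image True by simp
    then have "a * b * c * d * (1 - ?k * cnj ?k) = 0"
      by (simp add: algebra_simps)
    with nz k1 show False
      by simp
  next
    case False
    have w_image: "(a * c - e) *s w = (f * cinner z w) *s z"
      using image[of w] uw vw by simp
    then have "f * cinner z w \<noteq> 0"
      using False \<open>w \<noteq> 0\<close> by auto
    moreover have "(f * cinner z w) * cinner u z = 0"
      using arg_cong[OF w_image, of "cinner u"] uw by (simp add: cinner_smult_right cinner_diff_right)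
    ultimately have "cinner z u = 0"
      using cinner_commute[of z u] by simp
    then have "(a * c - e + b * c + b * d * ?k * cnj ?k) *s u + (a * d * cnj ?k) *s v = 0"
      using u_image by simp
    then have "a * d * cnj ?k = 0"
      using unit_pair_independent[OF uu vv k1] by blast
    with nz k0 show False
      by simp
  qed
qed

lemma outer_smult: "outer (k *s u) = mat (k * cnj k) ** outer u"
  unfolding vec_eq_iff forall_3 by (simp only: component_simps_3, simp add: algebra_simps)

lemma outer_mult_outer_eq_0:
  assumes "cinner u v = 0"
  shows "outer u ** outer v = 0"
proof -
  have "outer u ** outer v = mat (cinner u v) ** (\<chi> i j. u$i * cnj (v$j))"
    unfolding vec_eq_iff forall_3 by (simp only: component_simps_3 vec_lambda_beta, simp add: algebra_simps)
  with assms show ?thesis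
    by simp
qed

lemma outer_eq_if_cinner_unimodular:
  assumes "cinner u u = 1" "cinner v v = 1" "cinner u v * cnj (cinner u v) = 1"
  shows "outer v = outer u"
proof -
  let ?k = "cinner u v"
  have "cinner (v - ?k *s u) (v - ?k *s u) =
      cinner v v - ?k * cinner v u - cnj ?k * cinner u v + ?k * cnj ?k * cinner u u"
    by (simp add: cinner_def algebra_simps)
  also have "\<dots> = 0"
    using assms cinner_commute[of v u] by (simp add: mult.commute)
  finally have "v = ?k *s u"
    by (simp add: cinner_self_eq_0_iff)
  then have "outer v = outer (?k *s u)"
    by (rule arg_cong)
  also have "\<dots> = outer u"
    using assms(3) by (simp add: outer_smult)
  finally show ?thesis .
qed

lemma scalar_plus_rank_one_commute:
  assumes uu: "cinner u u = 1" and vv: "cinner v v = 1" and "a \<noteq> 0" "c \<noteq> 0"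
    and prod: "(mat a + mat b ** outer u) ** (mat c + mat d ** outer v) = mat e + mat f ** outer z"
  shows "(mat a + mat b ** outer u) ** (mat c + mat d ** outer v)
    = (mat c + mat d ** outer v) ** (mat a + mat b ** outer u)"
proof -
  let ?k = "cinner u v"
  have "outer u ** outer v = outer v ** outer u" if b0: "b \<noteq> 0" and d0: "d \<noteq> 0"
  proof -
    consider "?k = 0" | "?k * cnj ?k = 1"
      using scalar_plus_rank_one_product_not_scalar_plus_rank_one[OF uu vv _ _ \<open>a \<noteq> 0\<close> b0
          \<open>c \<noteq> 0\<close> d0] prod
      by blast
    then show ?thesis
    proof cases
      case 1
      then show ?thesis
        using cinner_commute[of v u] by (simp add: outer_mult_outer_eq_0)
    next
      case 2
      then show ?thesis
        using outer_eq_if_cinner_unimodular[OF uu vv] by simp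
    qed
  qed
  then have outer_commute: "mat (b * d) ** (outer u ** outer v) = mat (b * d) ** (outer v ** outer u)"
    by (cases "b = 0 \<or> d = 0") auto
  have expand: "(mat a' + mat b' ** U) ** (mat c' + mat d' ** V) =
      mat (a' * c') + mat (a' * d') ** V + mat (b' * c') ** U + mat (b' * d') ** (U ** V)"
    for a' b' c' d' and U V :: "complex^3^3"
    unfolding vec_eq_iff forall_3 by (simp only: component_simps_3, simp add: algebra_simps)
  show ?thesis
    unfolding expand outer_commute by (simp add: mult.commute add_ac)
qed

lemma commuting_scalar_plus_rank_one_eigenvector:
  assumes "(mat a + mat b ** outer u) ** B = B ** (mat a + mat b ** outer u)"
    and "b \<noteq> 0" and "cinner u u = 1"
  shows "\<exists>c. B *v u = c *s u"
proof -
  have "mat a ** B + mat b ** (outer u ** B) = mat a ** B + mat b ** (B ** outer u)"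
    using assms(1) by (simp add: matrix_add_rdistrib matrix_add_ldistrib matrix_mul_mat_left_commute
        matrix_mul_mat_commute flip: matrix_mul_assoc)
  then have "mat (1 / b) ** (mat b ** (outer u ** B)) = mat (1 / b) ** (mat b ** (B ** outer u))"
    by simp
  then have commute: "outer u ** B = B ** outer u"
    using assms(2) by (simp add: mat_mult_mat_mult)
  have "B *v u = B *v (outer u *v u)"
    by (simp add: outer_mult_vector assms(3))
  also have "\<dots> = outer u *v (B *v u)"
    by (simp add: matrix_vector_mul_assoc commute)
  also have "\<dots> = cinner u (B *v u) *s u"
    by (rule outer_mult_vector)
  finally show ?thesis
    by blast
qed

lemma commuting_scalar_plus_rank_one_common_eigenvector:
  assumes form: "\<And>A. A \<in> S \<Longrightarrow> \<exists>a b u. cinner u u = 1 \<and> A = mat a + mat b ** outer u"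
    and commute: "\<And>A B. A \<in> S \<Longrightarrow> B \<in> S \<Longrightarrow> A ** B = B ** A"
  obtains u :: "complex^3" where "u \<noteq> 0" "\<And>A. A \<in> S \<Longrightarrow> \<exists>c. A *v u = c *s u"
proof (cases "\<exists>a b u. b \<noteq> 0 \<and> cinner u u = 1 \<and> mat a + mat b ** outer u \<in> S")
  case True
  then obtain a b u where "b \<noteq> 0" "cinner u u = 1" and A0: "mat a + mat b ** outer u \<in> S"
    by blast
  moreover have "u \<noteq> 0"
    using \<open>cinner u u = 1\<close> by (auto simp: cinner_def)
  moreover have "\<exists>c. A *v u = c *s u" if "A \<in> S" for A
    using commuting_scalar_plus_rank_one_eigenvector[OF commute[OF A0 that]] \<open>b \<noteq> 0\<close>
      \<open>cinner u u = 1\<close> by blast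
  ultimately show ?thesis
    using that by blast
next
  case False
  have "\<exists>c. A *v axis 1 1 = c *s axis 1 1" if "A \<in> S" for A
  proof -
    obtain a b u where "cinner u u = 1" "A = mat a + mat b ** outer u"
      using form[OF \<open>A \<in> S\<close>] by blast
    with False \<open>A \<in> S\<close> have "A = mat a"
      by (cases "b = 0") auto
    then show ?thesis
      by (auto simp: mat_mult_vector)
  qed
  moreover have "axis 1 1 \<noteq> (0::complex^3)"
    by (simp add: axis_eq_0_iff)
  ultimately show ?thesis
    using that by blast
qed

lemma unitary_repeated_eigenvalues_common_eigenvector:
  assumes unitary: "\<And>A. A \<in> S \<Longrightarrow> A ** conj_transpose A = mat 1"
    and repeated: "\<And>A. A \<in> S \<Longrightarrow> card (eigenvalues3 A) \<noteq> 3"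
    and closed: "\<And>A B. A \<in> S \<Longrightarrow> B \<in> S \<Longrightarrow> A ** B \<in> S"
  obtains u :: "complex^3" where "u \<noteq> 0" "\<And>A. A \<in> S \<Longrightarrow> \<exists>c. A *v u = c *s u"
proof (rule commuting_scalar_plus_rank_one_common_eigenvector)
  have decomp: "\<exists>a b u. a \<noteq> 0 \<and> cinner u u = 1 \<and> A = mat a + mat b ** outer u" if "A \<in> S" for A
    using unitary_repeated_eigenvalue_decomp[OF unitary[OF that] repeated[OF that]] by metis
  then show "\<exists>a b u. cinner u u = 1 \<and> A = mat a + mat b ** outer u" if "A \<in> S" for A
    using that by blast
  show "A ** B = B ** A" if A_in: "A \<in> S" and B_in: "B \<in> S" for A B
  proof -
    obtain a b u where A: "a \<noteq> 0" "cinner u u = 1" "A = mat a + mat b ** outer u"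
      using decomp[OF A_in] by blast
    obtain c d v where B: "c \<noteq> 0" "cinner v v = 1" "B = mat c + mat d ** outer v"
      using decomp[OF B_in] by blast
    obtain e f z where "cinner z z = 1" "A ** B = mat e + mat f ** outer z"
      using decomp[OF closed[OF A_in B_in]] by blast
    then show ?thesis
      unfolding A(3) B(3) using scalar_plus_rank_one_commute[OF A(2) B(2) A(1) B(1)] by blast
  qed
qed (use that in blast)

section \<open>Irreducible representations\<close>

lemma complex_subspace_line: "complex_subspace (range (\<lambda>c. c *s u))"
  unfolding complex_subspace_def
proof (intro conjI ballI allI)
  show "0 \<in> range (\<lambda>c. c *s u)"
    using rangeI[of "\<lambda>c. c *s u" 0] by simp
  show "v + w \<in> range (\<lambda>c. c *s u)" if "v \<in> range (\<lambda>c. c *s u)" "w \<in> range (\<lambda>c. c *s u)" for v w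
    using that by (auto simp flip: vector_sadd_rdistrib)
  show "c *s v \<in> range (\<lambda>c. c *s u)" if "v \<in> range (\<lambda>c. c *s u)" for c v
    using that by (auto simp: vector_smult_assoc)
qed

lemma line_neq_UNIV: "range (\<lambda>c. c *s (u::complex^3)) \<noteq> UNIV"
proof
  assume "range (\<lambda>c. c *s u) = UNIV"
  then obtain c1 c2 where e1: "axis 1 1 = c1 *s u" and e2: "axis 2 1 = c2 *s u"
    by (metis UNIV_I rangeE)
  have "c2 *s axis 1 1 = c1 *s (axis 2 1 :: complex^3)"
    unfolding e1 e2 by (simp add: vector_smult_assoc mult.commute)
  from arg_cong[where f = "\<lambda>x. x $ (1::3)", OF this] have "c2 = 0"
    by (simp add: axis_def)
  then have "(axis 2 1 :: complex^3) = 0"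
    using e2 by simp
  then show False
    by (simp add: axis_eq_0_iff)
qed

lemma common_eigenvector_not_irreducible_rep:
  assumes "u \<noteq> 0" and eigen: "\<And>g. loopin X x0 g \<Longrightarrow> \<exists>c. \<rho> g *v u = c *s u"
  shows "\<not> irreducible_rep X x0 \<rho>"
proof -
  let ?W = "range (\<lambda>c. c *s u)"
  have "u \<in> ?W"
    by (metis rangeI vector_smult_lid)
  with \<open>u \<noteq> 0\<close> have "?W \<noteq> {0}"
    by blast
  moreover have "\<rho> g *v w \<in> ?W" if "loopin X x0 g" "w \<in> ?W" for g w
  proof -
    obtain c where "\<rho> g *v u = c *s u"
      using eigen[OF \<open>loopin X x0 g\<close>] by blast
    moreover obtain c' where "w = c' *s u"
      using \<open>w \<in> ?W\<close> by blast
    ultimately have "\<rho> g *v w = (c' * c) *s u"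
      by (simp add: vector_scalar_commute vector_smult_assoc)
    then show ?thesis
      by blast
  qed
  ultimately show ?thesis
    unfolding irreducible_rep_def using complex_subspace_line line_neq_UNIV by blast
qed

lemma loopin_loop_join:
  assumes g: "loopin X x0 g" and h: "loopin X x0 h"
  shows "loopin X x0 (loop_join g h)"
proof -
  let ?T01 = "top_of_set {0..1::real}"
  have g_ends: "continuous_map ?T01 X g" "g 0 = x0" "g 1 = x0"
    using g unfolding loopin_def pathin_def by auto
  have h_ends: "continuous_map ?T01 X h" "h 0 = x0" "h 1 = x0"
    using h unfolding loopin_def pathin_def by auto
  have eq: "loop_join g h = (\<lambda>x. if x \<le> 1/2 then (g \<circ> (\<lambda>t. 2 * t)) x else (h \<circ> (\<lambda>t. 2 * t - 1)) x)"
    by (simp add: loop_join_def fun_eq_iff)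
  have "continuous_map ?T01 X (\<lambda>x. if x \<le> 1/2 then (g \<circ> (\<lambda>t. 2 * t)) x else (h \<circ> (\<lambda>t. 2 * t - 1)) x)"
  proof (intro continuous_map_cases_le continuous_map_compose, force, force)
    show "continuous_map (subtopology ?T01 {x \<in> topspace ?T01. x \<le> 1/2}) ?T01 ((*) 2)"
      by (auto simp: continuous_map_in_subtopology continuous_map_from_subtopology)
    have "continuous_map
           (subtopology (top_of_set {0..1}) {x. 0 \<le> x \<and> x \<le> 1 \<and> 1 \<le> x * 2})
           euclideanreal (\<lambda>t. 2 * t - 1)"
      by (intro continuous_intros) (force intro: continuous_map_from_subtopology)
    then show "continuous_map (subtopology ?T01 {x \<in> topspace ?T01. 1/2 \<le> x}) ?T01 (\<lambda>t. 2 * t - 1)"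
      by (force simp: continuous_map_in_subtopology)
    show "(g \<circ> (*) 2) x = (h \<circ> (\<lambda>t. 2 * t - 1)) x" if "x \<in> topspace ?T01" "x = 1/2" for x
    proof -
      have "2 * x = 1"
        using that by simp
      then show ?thesis
        by (simp add: g_ends h_ends)
    qed
  qed (auto simp: g_ends h_ends)
  then have "pathin X (loop_join g h)"
    unfolding eq pathin_def .
  moreover have "loop_join g h 0 = x0" "loop_join g h 1 = x0"
    by (simp_all add: loop_join_def g_ends h_ends)
  ultimately show ?thesis
    by (simp add: loopin_def)
qed

theorem proposition6p4:
  fixes X :: "'a topology" and x0 :: 'a and \<rho> :: "(real \<Rightarrow> 'a) \<Rightarrow> complex^3^3"
  assumes "closed_3_manifold X"
    and "closed_orientable 3 X"
    and "integral_homology_3_sphere X"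
    and "x0 \<in> topspace X"
    and "pi1_rep_SU3 X x0 \<rho>"
    and "irreducible_rep X x0 \<rho>"
  shows "\<exists>\<gamma>. loopin X x0 \<gamma> \<and> card (eigenvalues3 (\<rho> \<gamma>)) = 3"
proof (rule ccontr)
  assume no_distinct: "\<nexists>\<gamma>. loopin X x0 \<gamma> \<and> card (eigenvalues3 (\<rho> \<gamma>)) = 3"
  let ?S = "\<rho> ` Collect (loopin X x0)"
  have rep: "\<And>g. loopin X x0 g \<Longrightarrow> \<rho> g \<in> SU3"
    "\<And>g h. loopin X x0 g \<Longrightarrow> loopin X x0 h \<Longrightarrow> \<rho> (loop_join g h) = \<rho> g ** \<rho> h"
    using assms(5) unfolding pi1_rep_SU3_def by blast+
  obtain u :: "complex^3" where "u \<noteq> 0" "\<And>A. A \<in> ?S \<Longrightarrow> \<exists>c. A *v u = c *s u"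
  proof (rule unitary_repeated_eigenvalues_common_eigenvector)
    show "A ** conj_transpose A = mat 1" "card (eigenvalues3 A) \<noteq> 3" if "A \<in> ?S" for A
      using that rep(1) no_distinct by (auto simp: SU3_def)
    show "A ** B \<in> ?S" if A_in: "A \<in> ?S" and B_in: "B \<in> ?S" for A B
    proof -
      obtain g h where "loopin X x0 g" "loopin X x0 h" "A = \<rho> g" "B = \<rho> h"
        using A_in B_in by blast
      then show ?thesis
        using rep(2) loopin_loop_join by (auto intro!: image_eqI[of _ \<rho> "loop_join g h"])
    qed
  qed (use that in blast)
  then have "\<not> irreducible_rep X x0 \<rho>"
    by (intro common_eigenvector_not_irreducible_rep) auto
  with assms(6) show False
    by contradiction
qed

end
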